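(* Let $\mathbb{I}>0$, $0<c\le1$, and for $\ell>0$ let $g_c(\ell)=4c\ell^2\int_0^\infty u^2\,\Phi\big(-\frac{u\ell\sqrt{c\mathbb{I}}}{2}\big)\phi(u)\,du$. Then $g_c$ is maximized at $\ell_{opt}=\frac{2.426}{\sqrt{c\,\mathbb{I}}}$ (constant to three decimals), and $$\alpha_{opt}=4\int_0^\infty\Phi\Big(-\frac{u\ell_{opt}\sqrt{c\,\mathbb{I}}}{2}\Big)\phi(u)\,du=0.439$$ up to three decimal places.
   Context: $\Phi,\phi$ are the standard normal cdf and density. $g_c$ is the diffusion speed of the limiting diffusion of additive TMCMC-within-Gibbs for i.i.d. product targets (each coordinate updated with probability tending to $c$), $\mathbb{I}=E_f[(f'/f)^2]$ is the Fisher information of the marginal density $f$, and $\alpha_{opt}$ is the corresponding optimal acceptance rate. *)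

theory Defs
  imports "HOL-Probability.Probability"
begin

definition phi :: "real \<Rightarrow> real" where
  "phi x = std_normal_density x"

definition Phi :: "real \<Rightarrow> real" where
  "Phi x = (LBINT t:{..x}. std_normal_density t)"

definition g_speed :: "real \<Rightarrow> real \<Rightarrow> real \<Rightarrow> real" where
  "g_speed I c l = 4 * c * l\<^sup>2 *
     (LBINT u:{0<..}. u\<^sup>2 * Phi (- (u * l * sqrt (c * I) / 2)) * phi u)"

definition accept_rate :: "real \<Rightarrow> real \<Rightarrow> real \<Rightarrow> real" where
  "accept_rate I c l = 4 * (LBINT u:{0<..}. Phi (- (u * l * sqrt (c * I) / 2)) * phi u)"

end

theory Submission
  imports Defs "HOL-Real_Asymp.Real_Asymp"
begin

text \<open>
  Writing \<open>\<Phi>(-a u) = \<integral>\<^sub>t\<^sub>\<ge>\<^sub>a u \<phi>(t u) dt\<close> and exchanging the order of integration reduces both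
  integrals to Gaussian moments in \<open>u\<close> followed by elementary integrals in \<open>t\<close>: with
  \<open>a = \<ell>\<surd>(c\<I>)/2\<close> one gets \<open>\<alpha> = 1 - 2 arctan a / \<pi>\<close> and
  \<open>g\<^sub>c(\<ell>) = 8/(\<pi>\<I>) \<cdot> a\<^sup>2 (\<pi>/2 - arctan a - a/(1+a\<^sup>2))\<close>.
  The derivative of this profile in \<open>a\<close> is \<open>2a\<close> times a function that decreases on
  \<open>[0,\<surd>3]\<close>, increases afterwards and tends to \<open>0\<close>; so it has a single zero \<open>a\<^sup>* \<approx> 1.213\<close>,
  where the profile is maximal, and \<open>\<ell>\<^sub>o\<^sub>p\<^sub>t\<surd>(c\<I>) = 2a\<^sup>*\<close>. Certified arctan bounds locate \<open>a\<^sup>*\<close>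
  in \<open>[4851/4000, 4853/4000]\<close> and bound the acceptance rate there.
\<close>

lemma phi_altdef: "phi x = exp (- x\<^sup>2 / 2) / sqrt (2*pi)"
  by (simp add: phi_def std_normal_density_def)

lemma phi_measurable [measurable]: "phi \<in> borel_measurable borel"
  unfolding phi_altdef by measurable

lemma phi_mult_phi: "phi (t*u) * phi u = exp (- ((1+t\<^sup>2) * u\<^sup>2 / 2)) / (2*pi)"
proof -
  have "phi (t*u) * phi u = exp (- (t*u)\<^sup>2 / 2 + - u\<^sup>2 / 2) / (sqrt (2*pi) * sqrt (2*pi))"
    unfolding phi_altdef exp_add by simp
  also have "- (t*u)\<^sup>2 / 2 + - u\<^sup>2 / 2 = - ((1+t\<^sup>2) * u\<^sup>2 / 2)"
    by (simp add: power_mult_distrib algebra_simps)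
  finally show ?thesis by simp
qed

lemma Phi_nonneg: "0 \<le> Phi x"
  unfolding Phi_def set_lebesgue_integral_def by (intro integral_nonneg_AE) auto

lemma Phi_nn_integral: "ennreal (Phi x) = (\<integral>\<^sup>+t. ennreal (indicator {..x} t * phi t) \<partial>lborel)"
proof -
  have "integrable lborel (\<lambda>t. indicator {..x} t *\<^sub>R std_normal_density t)"
    by (intro integrable_mult_indicator) auto
  then show ?thesis
    unfolding Phi_def set_lebesgue_integral_def phi_def real_scaleR_def
    by (intro nn_integral_eq_integral[symmetric]) auto
qed

lemma mono_Phi: "mono Phi"
proof
  fix x y :: real assume "x \<le> y"
  then have "ennreal (Phi x) \<le> ennreal (Phi y)"
    unfolding Phi_nn_integral
    by (intro nn_integral_mono) (auto simp: phi_def split: split_indicator)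
  then show "Phi x \<le> Phi y" using Phi_nonneg[of y] by simp
qed

lemma Phi_measurable [measurable]: "Phi \<in> borel_measurable borel"
  using mono_Phi by (rule borel_measurable_mono)

text \<open>The substitution \<open>s = -t u\<close> in the integral defining \<open>\<Phi>\<close>.\<close>
lemma Phi_scaled_nn_integral:
  assumes "u > 0"
  shows "ennreal (Phi (-(a*u))) = (\<integral>\<^sup>+t. ennreal (u * phi (t*u)) * indicator {a..} t \<partial>lborel)"
proof -
  have "ennreal (Phi (-(a*u)))
      = ennreal u * (\<integral>\<^sup>+t. ennreal (indicator {..-(a*u)} (0 + (-u) * t) * phi (0 + (-u) * t)) \<partial>lborel)"
    unfolding Phi_nn_integral using assms
    by (subst nn_integral_real_affine[where c = "-u" and t = 0]) (auto simp: phi_def)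
  also have "(\<lambda>t. ennreal (indicator {..-(a*u)} (0 + (-u) * t) * phi (0 + (-u) * t)))
           = (\<lambda>t. ennreal (phi (t*u)) * indicator {a..} t)"
    using assms by (auto simp: fun_eq_iff phi_altdef mult.commute split: split_indicator)
  finally show ?thesis
    using assms by (simp add: nn_integral_cmult[symmetric] ennreal_mult mult.assoc phi_def)
qed

lemma nn_integral_gaussian_moment_1:
  assumes "c > 0"
  shows "(\<integral>\<^sup>+u. ennreal (u * exp (- (c * u\<^sup>2 / 2))) * indicator {0..} u \<partial>lborel) = ennreal (1/c)"
proof -
  have "(\<integral>\<^sup>+u. ennreal (u * exp (- (c * u\<^sup>2 / 2))) * indicator {0..} u \<partial>lborel)
      = ennreal (0 - (- exp (- (c * 0\<^sup>2 / 2)) / c))"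
  proof (rule nn_integral_FTC_atLeast)
    show "((\<lambda>u::real. - exp (- (c * u\<^sup>2 / 2)) / c) \<longlongrightarrow> 0) at_top"
      using assms by real_asymp
    fix x :: real
    show "((\<lambda>u. - exp (- (c * u\<^sup>2 / 2)) / c) has_real_derivative x * exp (- (c * x\<^sup>2 / 2))) (at x)"
      using assms by (auto intro!: derivative_eq_intros simp: field_simps)
  qed auto
  then show ?thesis using assms by simp
qed

lemma nn_integral_gaussian_moment_3:
  assumes "c > 0"
  shows "(\<integral>\<^sup>+u. ennreal (u^3 * exp (- (c * u\<^sup>2 / 2))) * indicator {0..} u \<partial>lborel) = ennreal (2/c\<^sup>2)"
proof -
  have "(\<integral>\<^sup>+u. ennreal (u^3 * exp (- (c * u\<^sup>2 / 2))) * indicator {0..} u \<partial>lborel)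
      = ennreal (0 - (- ((0\<^sup>2/c + 2/c\<^sup>2) * exp (- (c * 0\<^sup>2 / 2)))))"
  proof (rule nn_integral_FTC_atLeast)
    show "((\<lambda>u::real. - ((u\<^sup>2/c + 2/c\<^sup>2) * exp (- (c * u\<^sup>2 / 2)))) \<longlongrightarrow> 0) at_top"
      using assms by real_asymp
    fix x :: real
    show "((\<lambda>u. - ((u\<^sup>2/c + 2/c\<^sup>2) * exp (- (c * u\<^sup>2 / 2)))) has_real_derivative
            x^3 * exp (- (c * x\<^sup>2 / 2))) (at x)"
      using assms
      by (auto intro!: derivative_eq_intros simp: field_simps power2_eq_square power3_eq_cube)
  qed auto
  then show ?thesis by simp
qed

lemma nn_integral_phi_mult_phi:
  "(\<integral>\<^sup>+u. ennreal (u^Suc k * phi (t*u) * phi u) * indicator {0<..} u \<partial>lborel)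
     = ennreal (1/(2*pi)) *
       (\<integral>\<^sup>+u. ennreal (u^Suc k * exp (- ((1+t\<^sup>2) * u\<^sup>2 / 2))) * indicator {0..} u \<partial>lborel)"
proof -
  have "ennreal (u^Suc k * phi (t*u) * phi u) * indicator {0<..} u
      = ennreal (1/(2*pi)) * (ennreal (u^Suc k * exp (- ((1+t\<^sup>2) * u\<^sup>2 / 2))) * indicator {0..} u)"
    for u
  proof -
    have "u^Suc k * phi (t*u) * phi u = 1/(2*pi) * (u^Suc k * exp (- ((1+t\<^sup>2) * u\<^sup>2 / 2)))"
      by (simp only: mult.assoc phi_mult_phi) simp
    then show ?thesis by (auto simp: ennreal_mult[symmetric] split: split_indicator)
  qed
  then show ?thesis by (simp add: nn_integral_cmult)
qed

lemma nn_integral_Phi_moment: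
  "(\<integral>\<^sup>+u. ennreal (u^k * Phi (-(a*u)) * phi u) * indicator {0<..} u \<partial>lborel)
     = (\<integral>\<^sup>+t. (\<integral>\<^sup>+u. ennreal (u^Suc k * phi (t*u) * phi u) * indicator {0<..} u \<partial>lborel)
                * indicator {a..} t \<partial>lborel)"
proof -
  let ?f = "\<lambda>u t. ennreal (u^Suc k * phi (t*u) * phi u) * indicator {0<..} u * indicator {a..} t"
  have "(\<integral>\<^sup>+u. ennreal (u^k * Phi (-(a*u)) * phi u) * indicator {0<..} u \<partial>lborel)
      = (\<integral>\<^sup>+u. \<integral>\<^sup>+t. ?f u t \<partial>lborel \<partial>lborel)"
  proof (intro nn_integral_cong)
    fix u :: real
    show "ennreal (u^k * Phi (-(a*u)) * phi u) * indicator {0<..} u = (\<integral>\<^sup>+t. ?f u t \<partial>lborel)"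
    proof (cases "u > 0")
      case True
      have "ennreal (u^k * Phi (-(a*u)) * phi u) = ennreal (u^k * phi u) * ennreal (Phi (-(a*u)))"
        using True Phi_nonneg[of "-(a*u)"] by (simp add: ennreal_mult phi_def mult_ac)
      also have "\<dots> = ennreal (u^k * phi u) * (\<integral>\<^sup>+t. ennreal (u * phi (t*u)) * indicator {a..} t \<partial>lborel)"
        using True by (simp only: Phi_scaled_nn_integral)
      also have "\<dots> = (\<integral>\<^sup>+t. ?f u t \<partial>lborel)"
        using True
        by (subst nn_integral_cmult[symmetric])
           (auto intro!: nn_integral_cong simp: phi_def ennreal_mult[symmetric] mult_ac
                 split: split_indicator)
      finally show ?thesis using True by simp
    qed simp
  qed
  also have "\<dots> = (\<integral>\<^sup>+t. \<integral>\<^sup>+u. ?f u t \<partial>lborel \<partial>lborel)"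
    by (rule lborel_pair.Fubini'[symmetric]) measurable
  also have "\<dots> = (\<integral>\<^sup>+t. (\<integral>\<^sup>+u. ennreal (u^Suc k * phi (t*u) * phi u) * indicator {0<..} u \<partial>lborel)
                          * indicator {a..} t \<partial>lborel)"
    by (intro nn_integral_cong) (simp add: nn_integral_multc)
  finally show ?thesis .
qed

lemma nonneg_if_deriv_nonpos_tendsto_0:
  fixes f f' :: "real \<Rightarrow> real"
  assumes "\<And>y. x \<le> y \<Longrightarrow> (f has_real_derivative f' y) (at y)"
    and "\<And>y. x \<le> y \<Longrightarrow> f' y \<le> 0"
    and "(f \<longlongrightarrow> 0) at_top"
  shows "0 \<le> f x"
proof (rule tendsto_upperbound[OF assms(3)])
  have "f y \<le> f x" if "x \<le> y" for y
    using that assms(1,2) by (intro DERIV_nonpos_imp_nonincreasing[OF that]) auto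
  then show "\<forall>\<^sub>F y in at_top. f y \<le> f x"
    by (auto simp: eventually_at_top_linorder)
qed simp

lemma one_plus_square_pos: "0 < 1 + (x::real)\<^sup>2"
  by (simp add: add_pos_nonneg)

definition sq_cauchy_tail :: "real \<Rightarrow> real" where
  "sq_cauchy_tail a = pi/2 - arctan a - a/(1+a\<^sup>2)"

lemma has_real_derivative_sq_cauchy_tail:
  "(sq_cauchy_tail has_real_derivative -(2/(1+x\<^sup>2)\<^sup>2)) (at x)"
proof -
  have nz: "1 + x\<^sup>2 \<noteq> 0" using one_plus_square_pos[of x] by simp
  have key: "- inverse q - (q - (2*q - 2)) / (q*q) = -(2/q\<^sup>2)" if "q \<noteq> 0" for q :: real
    using that by (simp add: field_simps power2_eq_square)
  have eq: "- inverse (1+x\<^sup>2) - (1 + x\<^sup>2 - x * (2 * x)) / ((1+x\<^sup>2) * (1+x\<^sup>2)) = -(2/(1+x\<^sup>2)\<^sup>2)"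
    using key[OF nz] by (simp add: power2_eq_square algebra_simps)
  show ?thesis
    unfolding sq_cauchy_tail_def by (auto intro!: derivative_eq_intros simp: nz eq)
qed

lemma sq_cauchy_tail_tendsto_0: "(sq_cauchy_tail \<longlongrightarrow> 0) at_top"
  unfolding sq_cauchy_tail_def by real_asymp

lemma sq_cauchy_tail_nonneg: "0 \<le> sq_cauchy_tail a"
  by (rule nonneg_if_deriv_nonpos_tendsto_0[OF has_real_derivative_sq_cauchy_tail _
        sq_cauchy_tail_tendsto_0]) simp

lemma nn_integral_cauchy_tail:
  "(\<integral>\<^sup>+t. ennreal (1/(1+t\<^sup>2)) * indicator {a..} t \<partial>lborel) = ennreal (pi/2 - arctan a)"
proof (rule nn_integral_FTC_atLeast)
  show "(arctan \<longlongrightarrow> pi/2) at_top" by (rule tendsto_arctan_at_top)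
  show "(arctan has_real_derivative 1/(1+x\<^sup>2)) (at x)" for x
    using DERIV_arctan[of x] by (simp add: inverse_eq_divide)
qed (auto simp: one_plus_square_pos)

lemma nn_integral_sq_cauchy_tail:
  "(\<integral>\<^sup>+t. ennreal (2/(1+t\<^sup>2)\<^sup>2) * indicator {a..} t \<partial>lborel) = ennreal (sq_cauchy_tail a)"
proof -
  have "(\<integral>\<^sup>+t. ennreal (2/(1+t\<^sup>2)\<^sup>2) * indicator {a..} t \<partial>lborel) = ennreal (0 - - sq_cauchy_tail a)"
  proof (rule nn_integral_FTC_atLeast)
    show "((\<lambda>t. - sq_cauchy_tail t) \<longlongrightarrow> 0) at_top"
      using tendsto_minus[OF sq_cauchy_tail_tendsto_0] by simp
    show "((\<lambda>t. - sq_cauchy_tail t) has_real_derivative 2/(1+x\<^sup>2)\<^sup>2) (at x)" for x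
      using DERIV_minus[OF has_real_derivative_sq_cauchy_tail] by simp
  qed auto
  then show ?thesis by simp
qed

lemma set_integral_eq_of_nn_integral:
  fixes f :: "'a \<Rightarrow> real"
  assumes [measurable]: "f \<in> borel_measurable M" "A \<in> sets M"
    and "\<And>x. x \<in> A \<Longrightarrow> 0 \<le> f x" and "0 \<le> r"
    and "(\<integral>\<^sup>+x. ennreal (f x) * indicator A x \<partial>M) = ennreal r"
  shows "(LINT x:A|M. f x) = r"
proof -
  have "(\<integral>\<^sup>+x. ennreal (indicator A x *\<^sub>R f x) \<partial>M) = (\<integral>\<^sup>+x. ennreal (f x) * indicator A x \<partial>M)"
    by (intro nn_integral_cong) (simp split: split_indicator)
  also note assms(5)
  finally have "has_bochner_integral M (\<lambda>x. indicator A x *\<^sub>R f x) r"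
    using assms(3,4) by (intro has_bochner_integral_nn_integral) (auto split: split_indicator)
  then show ?thesis
    unfolding set_lebesgue_integral_def by (rule has_bochner_integral_integral_eq)
qed

lemma set_integral_Phi_phi: "(LBINT u:{0<..}. Phi (-(a*u)) * phi u) = (pi/2 - arctan a)/(2*pi)"
proof (rule set_integral_eq_of_nn_integral)
  have inner: "(\<integral>\<^sup>+u. ennreal (u^Suc 0 * phi (t*u) * phi u) * indicator {0<..} u \<partial>lborel)
      = ennreal (1/(2*pi)) * ennreal (1/(1+t\<^sup>2))" for t
    using nn_integral_phi_mult_phi[of 0 t] nn_integral_gaussian_moment_1[OF one_plus_square_pos]
    by simp
  have "(\<integral>\<^sup>+u. ennreal (u^0 * Phi (-(a*u)) * phi u) * indicator {0<..} u \<partial>lborel)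
      = (\<integral>\<^sup>+t. ennreal (1/(2*pi)) * (ennreal (1/(1+t\<^sup>2)) * indicator {a..} t) \<partial>lborel)"
    unfolding nn_integral_Phi_moment inner by (simp add: mult.assoc)
  also have "\<dots> = ennreal (1/(2*pi)) * ennreal (pi/2 - arctan a)"
    by (simp add: nn_integral_cmult nn_integral_cauchy_tail)
  also have "\<dots> = ennreal ((pi/2 - arctan a)/(2*pi))"
    using arctan_ubound[of a] by (simp add: ennreal_mult[symmetric])
  finally show "(\<integral>\<^sup>+u. ennreal (Phi (-(a*u)) * phi u) * indicator {0<..} u \<partial>lborel)
      = ennreal ((pi/2 - arctan a)/(2*pi))"
    by simp
  show "0 \<le> (pi/2 - arctan a)/(2*pi)" using arctan_ubound[of a] by simp
qed (auto simp: Phi_nonneg phi_def)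

lemma set_integral_sq_Phi_phi:
  "(LBINT u:{0<..}. u\<^sup>2 * Phi (-(a*u)) * phi u) = sq_cauchy_tail a/(2*pi)"
proof (rule set_integral_eq_of_nn_integral)
  have inner: "(\<integral>\<^sup>+u. ennreal (u^Suc 2 * phi (t*u) * phi u) * indicator {0<..} u \<partial>lborel)
      = ennreal (1/(2*pi)) * ennreal (2/(1+t\<^sup>2)\<^sup>2)" for t
    using nn_integral_phi_mult_phi[of 2 t] nn_integral_gaussian_moment_3[OF one_plus_square_pos]
    by simp
  have "(\<integral>\<^sup>+u. ennreal (u^2 * Phi (-(a*u)) * phi u) * indicator {0<..} u \<partial>lborel)
      = (\<integral>\<^sup>+t. ennreal (1/(2*pi)) * (ennreal (2/(1+t\<^sup>2)\<^sup>2) * indicator {a..} t) \<partial>lborel)"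
    unfolding nn_integral_Phi_moment inner by (simp add: mult.assoc)
  also have "\<dots> = ennreal (1/(2*pi)) * ennreal (sq_cauchy_tail a)"
    by (simp add: nn_integral_cmult nn_integral_sq_cauchy_tail)
  also have "\<dots> = ennreal (sq_cauchy_tail a/(2*pi))"
    using sq_cauchy_tail_nonneg[of a] by (simp add: ennreal_mult[symmetric])
  finally show "(\<integral>\<^sup>+u. ennreal (u\<^sup>2 * Phi (-(a*u)) * phi u) * indicator {0<..} u \<partial>lborel)
      = ennreal (sq_cauchy_tail a/(2*pi))" .
  show "0 \<le> sq_cauchy_tail a/(2*pi)" using sq_cauchy_tail_nonneg[of a] by simp
qed (auto simp: Phi_nonneg phi_def)

lemma accept_rate_closed_form: "accept_rate I c l = 1 - 2 * arctan (l * sqrt (c*I) / 2) / pi"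
proof -
  have "\<And>u. u * l * sqrt (c*I) / 2 = (l * sqrt (c*I) / 2) * u" by simp
  then show ?thesis
    unfolding accept_rate_def by (simp only: set_integral_Phi_phi) (simp add: field_simps)
qed

definition speed_profile :: "real \<Rightarrow> real" where
  "speed_profile a = a\<^sup>2 * sq_cauchy_tail a"

lemma g_speed_closed_form:
  assumes "0 < I" "0 \<le> c"
  shows "g_speed I c l = 8/(pi*I) * speed_profile (l * sqrt (c*I) / 2)"
proof -
  have "\<And>u. u * l * sqrt (c*I) / 2 = (l * sqrt (c*I) / 2) * u" by simp
  then have "g_speed I c l = 4 * c * l\<^sup>2 * (sq_cauchy_tail (l * sqrt (c*I) / 2) / (2*pi))"
    unfolding g_speed_def by (simp only: set_integral_sq_Phi_phi)
  moreover have "(l * sqrt (c*I) / 2)\<^sup>2 = c * I * l\<^sup>2 / 4"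
    using assms by (simp add: power_mult_distrib power_divide)
  ultimately show ?thesis
    using assms unfolding speed_profile_def by (simp add: field_simps)
qed

definition speed_slope :: "real \<Rightarrow> real" where
  "speed_slope a = sq_cauchy_tail a - a/(1+a\<^sup>2)\<^sup>2"

lemma has_real_derivative_speed_slope:
  "(speed_slope has_real_derivative (x\<^sup>2 - 3)/(1+x\<^sup>2)^3) (at x)"
proof -
  have nz: "1 + x\<^sup>2 \<noteq> 0" using one_plus_square_pos[of x] by simp
  have key: "- (2/q\<^sup>2) - (q\<^sup>2 - 4*w*q) / q^4 = (w - 3)/q^3" if "q \<noteq> 0" "w = q - 1" for q w :: real
    using that(1) unfolding that(2) by (simp add: field_simps power2_eq_square eval_nat_numeral)
  have eq: "- (2/(1+x\<^sup>2)\<^sup>2) - ((1+x\<^sup>2)\<^sup>2 - x * (4 * (x * (1+x\<^sup>2)))) / (1+x\<^sup>2)^4 = (x\<^sup>2 - 3)/(1+x\<^sup>2)^3"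
    using key[OF nz, of "x\<^sup>2"] by (simp add: power2_eq_square algebra_simps)
  show ?thesis
    unfolding speed_slope_def
    by (auto intro!: derivative_eq_intros has_real_derivative_sq_cauchy_tail simp: nz eq)
qed

lemma has_real_derivative_speed_profile:
  "(speed_profile has_real_derivative 2 * x * speed_slope x) (at x)"
proof -
  have "1 + x\<^sup>2 \<noteq> 0" using one_plus_square_pos[of x] by simp
  then have "2 * x * sq_cauchy_tail x + -(2/(1+x\<^sup>2)\<^sup>2) * x\<^sup>2 = 2 * x * speed_slope x"
    unfolding speed_slope_def by (simp add: field_simps power2_eq_square)
  then show ?thesis
    unfolding speed_profile_def
    by (auto intro!: derivative_eq_intros has_real_derivative_sq_cauchy_tail)
qed

lemma speed_slope_antimono:
  assumes "0 \<le> x" "x \<le> y" "y \<le> sqrt 3"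
  shows "speed_slope y \<le> speed_slope x"
proof (rule DERIV_nonpos_imp_nonincreasing[OF assms(2)])
  fix t assume "x \<le> t" "t \<le> y"
  with assms have "t\<^sup>2 \<le> (sqrt 3)\<^sup>2"
    by (intro power_mono) auto
  then have "t\<^sup>2 \<le> 3" by simp
  then have "(t\<^sup>2 - 3)/(1+t\<^sup>2)^3 \<le> 0"
    by (intro divide_nonpos_pos) (auto simp: one_plus_square_pos)
  then show "\<exists>d. (speed_slope has_real_derivative d) (at t) \<and> d \<le> 0"
    using has_real_derivative_speed_slope by blast
qed

lemma speed_slope_nonpos:
  assumes "sqrt 3 \<le> x"
  shows "speed_slope x \<le> 0"
proof -
  have "0 \<le> - speed_slope x"
  proof (rule nonneg_if_deriv_nonpos_tendsto_0[where f = "\<lambda>y. - speed_slope y"])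
    show "((\<lambda>y. - speed_slope y) has_real_derivative - ((y\<^sup>2 - 3)/(1+y\<^sup>2)^3)) (at y)"
      if "x \<le> y" for y
      by (rule DERIV_minus) (rule has_real_derivative_speed_slope)
    show "- ((y\<^sup>2 - 3)/(1+y\<^sup>2)^3) \<le> 0" if "x \<le> y" for y
    proof -
      have "sqrt 3 \<le> y" using assms that by linarith
      then have "(sqrt 3)\<^sup>2 \<le> y\<^sup>2" by (intro power_mono) auto
      then have "3 \<le> y\<^sup>2" by simp
      then show ?thesis by (simp add: one_plus_square_pos)
    qed
    show "((\<lambda>y. - speed_slope y) \<longlongrightarrow> 0) at_top"
      unfolding speed_slope_def sq_cauchy_tail_def by real_asymp
  qed
  then show ?thesis by simp
qed

lemma speed_profile_le_at_slope_root:
  assumes "0 < s" "s \<le> sqrt 3" "speed_slope s = 0" "0 \<le> a"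
  shows "speed_profile a \<le> speed_profile s"
proof (cases "a \<le> s")
  case True
  show ?thesis
  proof (rule DERIV_nonneg_imp_nondecreasing[OF True])
    fix t assume "a \<le> t" "t \<le> s"
    with assms have "0 \<le> 2 * t * speed_slope t"
      using speed_slope_antimono[of t s] by simp
    then show "\<exists>d. (speed_profile has_real_derivative d) (at t) \<and> 0 \<le> d"
      using has_real_derivative_speed_profile by blast
  qed
next
  case False
  show ?thesis
  proof (rule DERIV_nonpos_imp_nonincreasing[of s a])
    show "s \<le> a" using False by simp
    fix t assume t: "s \<le> t" "t \<le> a"
    have "speed_slope t \<le> 0"
    proof (cases "t \<le> sqrt 3")
      case True
      then show ?thesis using speed_slope_antimono[of s t] t assms by simp
    next
      case False
      then show ?thesis using speed_slope_nonpos[of t] by simp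
    qed
    with t assms have "2 * t * speed_slope t \<le> 0"
      by (simp add: mult_nonneg_nonpos)
    then show "\<exists>d. (speed_profile has_real_derivative d) (at t) \<and> d \<le> 0"
      using has_real_derivative_speed_profile by blast
  qed
qed

text \<open>
  The alternating arctan series only applies on \<open>[0,1)\<close>; shifting by \<open>\<pi>/4\<close> moves the arguments
  near \<open>1.213\<close> to about \<open>0.096\<close>, where two to four terms of the series suffice.
\<close>
lemma arctan_one_plus_div_one_minus:
  assumes "\<bar>z\<bar> < 1"
  shows "arctan ((1+z)/(1-z)) = pi/4 + arctan z"
  using arctan_add[of 1 z] assms by (simp add: arctan_one)

lemma arctan_4851_4000: "arctan (4851/4000) = pi/4 + arctan (851/8851)"
  using arctan_one_plus_div_one_minus[of "851/8851"] by simp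

lemma arctan_4853_4000: "arctan (4853/4000) = pi/4 + arctan (853/8853)"
  using arctan_one_plus_div_one_minus[of "853/8853"] by simp

lemma speed_slope_4851_4000_pos: "0 < speed_slope (4851/4000)"
proof -
  have "arctan (851/8851) \<le> (\<Sum>k<2 * 1 + 1. (- 1) ^ k * (1 / real (k * 2 + 1) * (851/8851::real) ^ (k * 2 + 1)))"
    by (rule arctan_upper_bound) auto
  then show ?thesis
    unfolding speed_slope_def sq_cauchy_tail_def arctan_4851_4000
    using pi_approx(1) by (simp add: eval_nat_numeral)
qed

lemma speed_slope_4853_4000_neg: "speed_slope (4853/4000) < 0"
proof -
  have "(\<Sum>k<2 * 2. (- 1) ^ k * (1 / real (k * 2 + 1) * (853/8853::real) ^ (k * 2 + 1))) \<le> arctan (853/8853)"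
    by (rule arctan_lower_bound) auto
  then show ?thesis
    unfolding speed_slope_def sq_cauchy_tail_def arctan_4853_4000
    using pi_approx(2) by (simp add: eval_nat_numeral)
qed

lemma speed_slope_root:
  obtains s where "4851/4000 < s" "s < 4853/4000" "speed_slope s = 0"
proof -
  have "continuous_on {4851/4000..4853/4000} speed_slope"
    using has_real_derivative_speed_slope
    by (intro continuous_at_imp_continuous_on ballI DERIV_isCont) blast
  then obtain s where s: "4851/4000 \<le> s" "s \<le> 4853/4000" "speed_slope s = 0"
    using IVT2'[of speed_slope "4853/4000" 0 "4851/4000"]
      speed_slope_4851_4000_pos speed_slope_4853_4000_neg by auto
  moreover have "s \<noteq> 4851/4000" "s \<noteq> 4853/4000"
    using s(3) speed_slope_4851_4000_pos speed_slope_4853_4000_neg by (metis less_irrefl)+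
  ultimately show ?thesis
    using that[of s] by (force simp: order_le_less)
qed

lemma acceptance_bounds:
  assumes "4851/4000 \<le> s" "s \<le> 4853/4000"
  shows "0.4385 \<le> 1 - 2 * arctan s / pi" "1 - 2 * arctan s / pi < 0.4395"
proof -
  have "arctan (853/8853) \<le> (\<Sum>k<2 * 0 + 1. (- 1) ^ k * (1 / real (k * 2 + 1) * (853/8853::real) ^ (k * 2 + 1)))"
    by (rule arctan_upper_bound) auto
  moreover have "(\<Sum>k<2 * 1. (- 1) ^ k * (1 / real (k * 2 + 1) * (851/8851::real) ^ (k * 2 + 1))) \<le> arctan (851/8851)"
    by (rule arctan_lower_bound) auto
  moreover have "arctan (4851/4000) \<le> arctan s" "arctan s \<le> arctan (4853/4000)"
    using assms by (simp_all add: arctan_le_iff)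
  ultimately have "pi/4 + 851/8851 - (851/8851)^3/3 \<le> arctan s" "arctan s \<le> pi/4 + 853/8853"
    unfolding arctan_4851_4000 arctan_4853_4000 by (simp_all add: eval_nat_numeral)
  then show "0.4385 \<le> 1 - 2 * arctan s / pi" "1 - 2 * arctan s / pi < 0.4395"
    using pi_approx by (simp_all add: field_simps)
qed

lemma speed_profile_maximiser:
  obtains s where "4851/4000 < s" "s < 4853/4000" "\<And>a. 0 \<le> a \<Longrightarrow> speed_profile a \<le> speed_profile s"
proof -
  obtain s where s: "4851/4000 < s" "s < 4853/4000" "speed_slope s = 0"
    by (rule speed_slope_root)
  have "s\<^sup>2 \<le> (4853/4000)\<^sup>2"
    using s by (intro power_mono) auto
  also have "\<dots> \<le> 3" by (simp add: power2_eq_square)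
  finally have "s \<le> sqrt 3"
    by (rule real_le_rsqrt)
  moreover have "0 < s" using s(1) by simp
  ultimately show ?thesis
    using that[OF s(1,2)] speed_profile_le_at_slope_root s(3) by blast
qed

theorem corollary2:
  "\<exists>k::real. 2.4255 \<le> k \<and> k < 2.4265 \<and>
     (\<forall>I c::real. I > 0 \<longrightarrow> 0 < c \<longrightarrow> c \<le> 1 \<longrightarrow>
        (let l_opt = k / sqrt (c * I) in
           (\<forall>l>0. g_speed I c l \<le> g_speed I c l_opt) \<and>
           0.4385 \<le> accept_rate I c l_opt \<and> accept_rate I c l_opt < 0.4395))"
proof -
  obtain s where s: "4851/4000 < s" "s < 4853/4000"
    and profile_max: "\<And>a. 0 \<le> a \<Longrightarrow> speed_profile a \<le> speed_profile s"
    using speed_profile_maximiser by blast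
  show ?thesis
  proof (intro exI[where x = "2 * s"] conjI allI impI)
    fix I c :: real assume I: "I > 0" and c: "0 < c"
    have a_opt: "(2 * s / sqrt (c*I)) * sqrt (c*I) / 2 = s"
      using I c by simp
    have "g_speed I c l \<le> g_speed I c (2 * s / sqrt (c*I))" if "l > 0" for l
    proof -
      have "speed_profile (l * sqrt (c*I) / 2) \<le> speed_profile s"
        using that I c by (intro profile_max) simp
      then show ?thesis
        unfolding g_speed_closed_form[OF I less_imp_le[OF c]] a_opt
        using I by (intro mult_left_mono) simp_all
    qed
    moreover have "accept_rate I c (2 * s / sqrt (c*I)) = 1 - 2 * arctan s / pi"
      unfolding accept_rate_closed_form a_opt ..
    ultimately show "let l_opt = 2 * s / sqrt (c * I) in
            (\<forall>l>0. g_speed I c l \<le> g_speed I c l_opt) \<and>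
            0.4385 \<le> accept_rate I c l_opt \<and> accept_rate I c l_opt < 0.4395"
      using acceptance_bounds[of s] s by (simp add: Let_def)
  qed (use s in auto)
qed

end
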